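(* Let $\mathcal{P}\subset\mathbb{R}^d$ be a finite set of $n$ item vectors, $\bm{q}\in\mathbb{R}^d$ a query vector, $k>1$ an integer with $k\le n$, $\lambda\in[0,1]$ and $\mu>0$, and assume $\langle \bm{x},\bm{y}\rangle\ge 0$ for all $\bm{x},\bm{y}\in\mathcal{P}\cup\{\bm{q}\}$. Let $f$ denote either $f_{avg}$ or $f_{max}$ (defined in the context), and let $\mathcal{S}^*\in\arg\max_{\mathcal{T}\subseteq\mathcal{P},|\mathcal{T}|=k} f(\mathcal{T})$. Let $\mathcal{S}$ be the output of the Greedy algorithm run with this $f$, and let $\mathcal{S}'$ be a $k$MIPS result for $\bm{q}$, i.e., a set of $k$ vectors of $\mathcal{P}$ such that $\langle \bm{p},\bm{q}\rangle\ge\langle \bm{p}',\bm{q}\rangle$ for all $\bm{p}\in\mathcal{S}'$, $\bm{p}'\in\mathcal{P}\setminus\mathcal{S}'$. Define $\overline{f}(\mathcal{T}) := \frac{\lambda}{k}\sum_{\bm{p}\in\mathcal{T}}\langle \bm{p},\bm{q}\rangle$, and let $div^* = \max_{\mathcal{T}\subseteq\mathcal{P},|\mathcal{T}|=k}\frac{2\mu(1-\lambda)}{k(k-1)}\sum_{\{\bm{p}_x,\bm{p}_y\}\subseteq\mathcal{T},\,\bm{p}_x\ne\bm{p}_y}\langle\bm{p}_x,\bm{p}_y\rangle$ if $f=f_{avg}$, and $div^*=\max_{\bm{p}_x\neq\bm{p}_y\in\mathcal{P}}\mu(1-\lambda)\langle\bm{p}_x,\bm{p}_y\rangle$ if $f=f_{max}$.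 Suppose $f(\mathcal{S}')>0$. Then $$f(\mathcal{S})\ \ge\ \max\!\Big(\tfrac{f(\mathcal{S}')}{\overline{f}(\mathcal{S}')}\cdot f(\mathcal{S}^* ),\ f(\mathcal{S}^* )-div^*\Big)-\Delta',\qquad\text{where } \Delta'=\max\big(0,\ f(\mathcal{S}')-f(\mathcal{S})\big).$$
   Context: For $\mathcal{S}\subseteq\mathcal{P}$ define $f_{avg}(\mathcal{S}) = \frac{\lambda}{k}\sum_{\bm{p}\in\mathcal{S}}\langle\bm{p},\bm{q}\rangle - \frac{2\mu(1-\lambda)}{k(k-1)}\sum_{\{\bm{p},\bm{p}'\}\subseteq\mathcal{S},\,\bm{p}\neq\bm{p}'}\langle\bm{p},\bm{p}'\rangle$ (sum over unordered pairs of distinct elements), and $f_{max}(\mathcal{S}) = \frac{\lambda}{k}\sum_{\bm{p}\in\mathcal{S}}\langle\bm{p},\bm{q}\rangle - \mu(1-\lambda)\max_{\bm{p}\neq\bm{p}'\in\mathcal{S}}\langle\bm{p},\bm{p}'\rangle$, where a maximum over an empty collection of pairs is taken to be $0$. Marginal gains: $\Delta_{f_{avg}}(\bm{p},\mathcal{S}) = \frac{\lambda}{k}\langle\bm{p},\bm{q}\rangle - \frac{2\mu(1-\lambda)}{k(k-1)}\sum_{\bm{p}'\in\mathcal{S}}\langle\bm{p},\bm{p}'\rangle$ and $\Delta_{f_{max}}(\bm{p},\mathcal{S}) = \frac{\lambda}{k}\langle\bm{p},\bm{q}\rangle - \mu(1-\lambda)\big(\max_{\bm{p}_x\ne\bm{p}_y\in\mathcal{S}\cup\{\bm{p}\}}\langle\bm{p}_x,\bm{p}_y\rangle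 - \max_{\bm{p}_x\ne\bm{p}_y\in\mathcal{S}}\langle\bm{p}_x,\bm{p}_y\rangle\big)$ (same empty-max convention). Greedy algorithm: set $\mathcal{S}=\{\bm{p}^*\}$ with $\bm{p}^*\in\arg\max_{\bm{p}\in\mathcal{P}}\langle\bm{p},\bm{q}\rangle$; then for $i=2,\dots,k$, choose $\bm{p}^*\in\arg\max_{\bm{p}\in\mathcal{P}\setminus\mathcal{S}}\Delta_f(\bm{p},\mathcal{S})$ and set $\mathcal{S}\leftarrow\mathcal{S}\cup\{\bm{p}^*\}$ (ties broken arbitrarily); output $\mathcal{S}$. *)

theory Defs
  imports "HOL-Analysis.Analysis"
begin

datatype objective = Avg | MaxDiv

text \<open>Sum of inner products over unordered pairs of distinct elements of S
  (each unordered pair counted once: the ordered double sum halved).\<close>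
definition pairsum :: "'a::real_inner set \<Rightarrow> real" where
  "pairsum S = (\<Sum>x\<in>S. \<Sum>y\<in>S - {x}. inner x y) / 2"

definition maxpair :: "'a::real_inner set \<Rightarrow> real" where
  "maxpair S = (if {inner x y | x y. x \<in> S \<and> y \<in> S \<and> x \<noteq> y} = {} then 0
                else Max {inner x y | x y. x \<in> S \<and> y \<in> S \<and> x \<noteq> y})"

definition relv :: "nat \<Rightarrow> real \<Rightarrow> 'a::real_inner \<Rightarrow> 'a set \<Rightarrow> real" where
  "relv k lam q S = lam / real k * (\<Sum>p\<in>S. inner p q)"

definition f_avg :: "nat \<Rightarrow> real \<Rightarrow> real \<Rightarrow> 'a::real_inner \<Rightarrow> 'a set \<Rightarrow> real" where
  "f_avg k lam mu q S = lam / real k * (\<Sum>p\<in>S. inner p q)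
     - 2 * mu * (1 - lam) / (real k * (real k - 1)) * pairsum S"

definition f_max :: "nat \<Rightarrow> real \<Rightarrow> real \<Rightarrow> 'a::real_inner \<Rightarrow> 'a set \<Rightarrow> real" where
  "f_max k lam mu q S = lam / real k * (\<Sum>p\<in>S. inner p q) - mu * (1 - lam) * maxpair S"

definition gain_avg :: "nat \<Rightarrow> real \<Rightarrow> real \<Rightarrow> 'a::real_inner \<Rightarrow> 'a \<Rightarrow> 'a set \<Rightarrow> real" where
  "gain_avg k lam mu q p S = lam / real k * inner p q
     - 2 * mu * (1 - lam) / (real k * (real k - 1)) * (\<Sum>p'\<in>S. inner p p')"

definition gain_max :: "nat \<Rightarrow> real \<Rightarrow> real \<Rightarrow> 'a::real_inner \<Rightarrow> 'a \<Rightarrow> 'a set \<Rightarrow> real" where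
  "gain_max k lam mu q p S = lam / real k * inner p q
     - mu * (1 - lam) * (maxpair (insert p S) - maxpair S)"

fun fobj :: "objective \<Rightarrow> nat \<Rightarrow> real \<Rightarrow> real \<Rightarrow> 'a::real_inner \<Rightarrow> 'a set \<Rightarrow> real" where
  "fobj Avg = f_avg"
| "fobj MaxDiv = f_max"

fun gain :: "objective \<Rightarrow> nat \<Rightarrow> real \<Rightarrow> real \<Rightarrow> 'a::real_inner \<Rightarrow> 'a \<Rightarrow> 'a set \<Rightarrow> real" where
  "gain Avg = gain_avg"
| "gain MaxDiv = gain_max"

fun divstar :: "objective \<Rightarrow> nat \<Rightarrow> real \<Rightarrow> real \<Rightarrow> 'a::real_inner set \<Rightarrow> real" where
  "divstar Avg k lam mu P =
     Max {2 * mu * (1 - lam) / (real k * (real k - 1)) * pairsum T | T. T \<subseteq> P \<and> card T = k}"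
| "divstar MaxDiv k lam mu P =
     Max {mu * (1 - lam) * inner x y | x y. x \<in> P \<and> y \<in> P \<and> x \<noteq> y}"

text \<open>A possible execution of the Greedy algorithm (ties broken arbitrarily), recorded
  as the list of items in the order they are picked.\<close>
definition greedy_trace ::
  "objective \<Rightarrow> nat \<Rightarrow> real \<Rightarrow> real \<Rightarrow> 'a::real_inner \<Rightarrow> 'a set \<Rightarrow> 'a list \<Rightarrow> bool" where
  "greedy_trace obj k lam mu q P xs \<longleftrightarrow>
     length xs = k \<and>
     (\<forall>i<k. xs ! i \<in> P - set (take i xs)) \<and>
     (0 < k \<longrightarrow> (\<forall>p\<in>P. inner p q \<le> inner (xs ! 0) q)) \<and>
     (\<forall>i. 1 \<le> i \<and> i < k \<longrightarrow>
        (\<forall>p\<in>P - set (take i xs).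
           gain obj k lam mu q p (set (take i xs)) \<le> gain obj k lam mu q (xs ! i) (set (take i xs))))"

end

theory Submission
  imports Defs
begin

text \<open>Nonnegative inner products make
  the diversity penalty nonnegative, so f \<le> f-bar (= relv); and the kMIPS result S' maximises
  f-bar among k-subsets. Hence f(S*) \<le> f-bar(S*) \<le> f-bar(S'), which bounds the first term
  as f(S')/f-bar(S') \<ge> 0. For the second, the penalty of S' is at most div*, so
  f-bar(S') - div* \<le> f(S').\<close>

lemma sum_le_sum_of_dominating:
  fixes g :: "'a \<Rightarrow> 'b::ordered_comm_monoid_add"
  assumes fin: "finite S" "finite T" and card_eq: "card T = card S"
    and dom: "\<And>p p'. p \<in> S \<Longrightarrow> p' \<in> T - S \<Longrightarrow> g p' \<le> g p"
  shows "sum g T \<le> sum g S"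
proof -
  have "card (S - T) = card (T - S)"
    using card_eq fin by (simp add: card_Diff_subset_Int Int_commute)
  then obtain h where h: "bij_betw h (S - T) (T - S)"
    using finite_same_card_bij[of "S - T" "T - S"] fin by blast
  have "sum g (T - S) = sum (\<lambda>x. g (h x)) (S - T)"
    by (rule sum.reindex_bij_betw[OF h, symmetric])
  also have "\<dots> \<le> sum g (S - T)"
    using bij_betwE[OF h] dom by (intro sum_mono) simp
  finally have "sum g (T - S) \<le> sum g (S - T)" .
  then have "sum g (S \<inter> T) + sum g (T - S) \<le> sum g (S \<inter> T) + sum g (S - T)"
    by (rule add_left_mono)
  then show ?thesis
    using sum.Int_Diff[OF fin(1), of g T] sum.Int_Diff[OF fin(2), of g S] by (simp add: Int_commute)
qed

lemma finite_distinct_pair_image: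
  "finite S \<Longrightarrow> finite {f x y | x y. x \<in> S \<and> y \<in> S \<and> x \<noteq> y}"
proof -
  assume "finite S"
  moreover have "{f x y | x y. x \<in> S \<and> y \<in> S \<and> x \<noteq> y} \<subseteq> (\<lambda>(x, y). f x y) ` (S \<times> S)"
    by auto
  ultimately show ?thesis by (meson finite_SigmaI finite_imageI finite_subset)
qed

lemma pairsum_nonneg:
  "\<forall>x\<in>S. \<forall>y\<in>S. inner x y \<ge> 0 \<Longrightarrow> pairsum S \<ge> 0"
  unfolding pairsum_def by (intro divide_nonneg_pos sum_nonneg) auto

lemma maxpair_attained:
  assumes "finite S" "card S \<ge> 2"
  obtains x y where "x \<in> S" "y \<in> S" "x \<noteq> y" "maxpair S = inner x y"
proof -
  let ?M = "{inner x y | x y. x \<in> S \<and> y \<in> S \<and> x \<noteq> y}"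
  have "\<not> card S \<le> Suc 0" using assms(2) by simp
  then have ne: "?M \<noteq> {}" using card_le_Suc0_iff_eq[OF assms(1)] by blast
  then have "Max ?M \<in> ?M"
    using finite_distinct_pair_image[OF assms(1)] by (rule Max_in[rotated])
  then obtain x y where xy: "x \<in> S" "y \<in> S" "x \<noteq> y" "Max ?M = inner x y" by blast
  have "maxpair S = Max ?M" using ne unfolding maxpair_def by presburger
  with xy show thesis by (intro that[of x y]) simp_all
qed

lemma maxpair_nonneg:
  assumes "finite S" "\<forall>x\<in>S. \<forall>y\<in>S. inner x y \<ge> 0"
  shows "maxpair S \<ge> 0"
proof (cases "card S \<ge> 2")
  case True
  then obtain x y where "x \<in> S" "y \<in> S" "maxpair S = inner x y"
    using maxpair_attained[OF assms(1) True] by blast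
  then show ?thesis using assms(2) by simp
next
  case False
  then have "card S \<le> Suc 0" by simp
  then have "\<forall>x\<in>S. \<forall>y\<in>S. x = y" using card_le_Suc0_iff_eq[OF assms(1)] by blast
  then have "{inner x y | x y. x \<in> S \<and> y \<in> S \<and> x \<noteq> y} = {}" by auto
  then show ?thesis unfolding maxpair_def by simp
qed

lemma fobj_le_relv:
  assumes "finite S" "\<forall>x\<in>S. \<forall>y\<in>S. inner x y \<ge> 0"
    and "k > 1" "lam \<le> 1" "mu \<ge> 0"
  shows "fobj obj k lam mu q S \<le> relv k lam q S"
proof (cases obj)
  case Avg
  have "2 * mu * (1 - lam) / (real k * (real k - 1)) \<ge> 0"
    using assms(3-5) by simp
  then have "2 * mu * (1 - lam) / (real k * (real k - 1)) * pairsum S \<ge> 0"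
    using pairsum_nonneg[OF assms(2)] by (rule mult_nonneg_nonneg)
  then show ?thesis using Avg by (simp add: f_avg_def relv_def)
next
  case MaxDiv
  have "mu * (1 - lam) \<ge> 0" using assms(4,5) by simp
  then show ?thesis
    using MaxDiv maxpair_nonneg[OF assms(1,2)] by (simp add: f_max_def relv_def)
qed

lemma relv_minus_divstar_le_fobj:
  assumes "finite P" "S \<subseteq> P" "card S = k" "k > 1"
  shows "relv k lam q S - divstar obj k lam mu P \<le> fobj obj k lam mu q S"
proof (cases obj)
  case Avg
  let ?c = "2 * mu * (1 - lam) / (real k * (real k - 1))"
  let ?M = "{?c * pairsum T | T. T \<subseteq> P \<and> card T = k}"
  have "?M \<subseteq> (\<lambda>T. ?c * pairsum T) ` Pow P" by auto
  then have "finite ?M" using assms(1) finite_subset by blast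
  moreover have "?c * pairsum S \<in> ?M" using assms(2,3) by blast
  ultimately have "?c * pairsum S \<le> Max ?M" by simp
  then show ?thesis using Avg by (simp add: f_avg_def relv_def)
next
  case MaxDiv
  let ?M = "{mu * (1 - lam) * inner x y | x y. x \<in> P \<and> y \<in> P \<and> x \<noteq> y}"
  have "card S \<ge> 2" using assms(3,4) by simp
  then obtain x y where "x \<in> S" "y \<in> S" "x \<noteq> y" "maxpair S = inner x y"
    using maxpair_attained finite_subset[OF assms(2,1)] by blast
  moreover have "mu * (1 - lam) * inner x y \<le> Max ?M"
    using calculation(1-3) assms(2)
    by (intro Max_ge[OF finite_distinct_pair_image[OF assms(1)]]) blast
  ultimately have "mu * (1 - lam) * maxpair S \<le> Max ?M" by simp
  then show ?thesis using MaxDiv by (simp add: f_max_def relv_def)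
qed

theorem theorem1:
  fixes P :: "'a::euclidean_space set" and q :: 'a and k :: nat and lam mu :: real
    and obj :: objective and Sstar S' :: "'a set" and xs :: "'a list"
  assumes finP: "finite P"
    and k_gt1: "k > 1" and k_le: "k \<le> card P"
    and lam: "0 \<le> lam" "lam \<le> 1" and mu: "mu > 0"
    and nonneg: "\<forall>x\<in>insert q P. \<forall>y\<in>insert q P. inner x y \<ge> 0"
    and opt: "Sstar \<subseteq> P" "card Sstar = k"
       "\<forall>T. T \<subseteq> P \<and> card T = k \<longrightarrow> fobj obj k lam mu q T \<le> fobj obj k lam mu q Sstar"
    and greedy: "greedy_trace obj k lam mu q P xs"
    and kmips: "S' \<subseteq> P" "card S' = k" "\<forall>p\<in>S'. \<forall>p'\<in>P - S'. inner p' q \<le> inner p q"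
    and pos: "fobj obj k lam mu q S' > 0"
  shows "fobj obj k lam mu q (set xs) \<ge>
     max (fobj obj k lam mu q S' / relv k lam q S' * fobj obj k lam mu q Sstar)
         (fobj obj k lam mu q Sstar - divstar obj k lam mu P)
     - max 0 (fobj obj k lam mu q S' - fobj obj k lam mu q (set xs))"
proof -
  let ?f = "fobj obj k lam mu q" and ?r = "relv k lam q"
  have f_le_r: "?f T \<le> ?r T" if "T \<subseteq> P" for T
  proof -
    have "\<forall>x\<in>T. \<forall>y\<in>T. inner x y \<ge> 0" using that nonneg by blast
    with finite_subset[OF that finP] show ?thesis
      using k_gt1 lam(2) mu by (intro fobj_le_relv) simp_all
  qed
  have "?r Sstar \<le> ?r S'"
    unfolding relv_def using lam(1) kmips opt(1,2) finite_subset finP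
    by (intro mult_left_mono sum_le_sum_of_dominating) auto
  then have opt_le: "?f Sstar \<le> ?r S'" using f_le_r[OF opt(1)] by linarith
  have r_pos: "?r S' > 0" using f_le_r[OF kmips(1)] pos by linarith
  have "?f S' / ?r S' * ?f Sstar \<le> ?f S' / ?r S' * ?r S'"
    using opt_le pos r_pos by (intro mult_left_mono) simp_all
  then have "?f S' / ?r S' * ?f Sstar \<le> ?f S'" using r_pos by simp
  moreover have "?f Sstar - divstar obj k lam mu P \<le> ?f S'"
    using relv_minus_divstar_le_fobj[OF finP kmips(1,2) k_gt1, of lam q obj mu] opt_le
    by linarith
  ultimately show ?thesis by linarith
qed

end
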